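(* Let $r\ge1$ and $n\ge1$ be integers and let $\mathcal P(n-1,r,r+1)$ be the set of lattice paths with steps $(1,1)$ (up) and $(1,-r)$ (down) from $(0,0)$ to $((r+1)n,r+1)$ (so with $rn+1$ up steps and $n-1$ down steps); the steps occupy positions $0,1,\dots,(r+1)n-1$, the step in position $m$ starting at the vertex reached after $m$ steps. (1) Let $n_0,\dots,n_r$ be positive integers with $n_0\ge2$ and $\sum_{i=0}^{r}(n_i-1)=n-1$. Among the paths in $\mathcal P(n-1,r,r+1)$ that start with a down step and have, for each $i=0,\dots,r$, exactly $n_i-1$ down steps in positions congruent to $i \pmod{r+1}$, the number having exactly $j$ down steps in positions congruent to $0\pmod{r+1}$ that start on or below the $x$-axis is independent of $j$ for $j=1,\dots,n_0-1$, and equals $\frac{1}{n_0-1}\binom{n-1}{n_0-2}\binom{n}{n_1-1}\cdots\binom{n}{n_r-1}$. (2) Let $n_0,\dots,n_r$ be nonnegative integers with $n_0\ge1$ and $n_0+\cdots+n_r=rn+1$. Among the paths in $\mathcal P(n-1,r,r+1)$ that start with an up step and have, for each $i=0,\dots,r$, exactly $n_i$ up steps in positions congruent to $i\pmod{r+1}$, the number having exactly $j$ up steps in positions congruent to $0\pmod{r+1}$ that start on or below the $x$-axis is independent of $j$ for $j=1,\dots,n_0$, and equals $\frac{1}{n_0}\binom{n-1}{n_0-1}\binom{n}{n_1}\cdots\binom{n}{n_r}$.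
   Context: A step starts on or below the $x$-axis if its initial vertex has $y$-coordinate $\le0$. *)

theory Defs
  imports Complex_Main
begin

text \<open>A lattice path is a list of steps: True = up step (1,1), False = down step (1,-r).
  The step in position m (0-based) starts at the vertex reached after m steps,
  whose y-coordinate is height r p m.\<close>

definition height :: "nat \<Rightarrow> bool list \<Rightarrow> nat \<Rightarrow> int" where
  "height r p m = (\<Sum>k<m. if p ! k then 1 else - int r)"

definition lpaths :: "nat \<Rightarrow> nat \<Rightarrow> bool list set" where
  "lpaths r n = {p. length p = (r + 1) * n \<and> height r p (length p) = int r + 1}"

end

theory Submission
  imports Defs "HOL-Library.FuncSet" "HOL-Library.Product_Lexorder"
begin

text \<open>Rotating a path by a multiple of \<open>r + 1\<close> preserves its endpoint and the number of
  steps of each kind in each residue class of positions. Call a block (positions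
  \<open>k(r+1), \<dots>, k(r+1)+r\<close>) marked if it starts with the step kind \<open>v\<close> under consideration.
  Rotating a path so that it starts at the marked block \<open>a\<close>, the statistic of the rotated path
  is the rank of \<open>a\<close> among the marked blocks ordered by starting height (heights at block
  starts are multiples of \<open>r + 1\<close>, which settles the wrap-around). Ranks run through
  \<open>1, \<dots>, c\<^sub>0\<close>, so double counting pairs (path, marked block) through the rotation
  involution shows that every value of the statistic is taken by exactly a \<open>1/c\<^sub>0\<close> fraction of
  the class. The class itself is counted by reading each residue class of positions as a subset
  of \<open>{0, \<dots>, n-1}\<close>; the one of class 0 contains 0, since the path starts with \<open>v\<close>.\<close>

lemma bij_betw_filter:
  assumes "bij_betw g A A'"
  shows "bij_betw g {x \<in> A. P (g x)} {y \<in> A'. P y}"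
proof (rule bij_betw_subset[OF assms])
  have "g ` A = A'" using assms by (rule bij_betw_imp_surj_on)
  then show "g ` {x \<in> A. P (g x)} = {y \<in> A'. P y}" by force
qed auto

lemma card_filter_bij_betw:
  assumes "bij_betw g A A"
  shows "card {x \<in> A. P (g x)} = card {x \<in> A. P x}"
  using bij_betw_filter[OF assms] by (rule bij_betw_same_card)

lemma bij_betw_involution:
  assumes "\<Phi> ` A \<subseteq> A" and "\<And>x. x \<in> A \<Longrightarrow> \<Phi> (\<Phi> x) = x"
  shows "bij_betw \<Phi> A A"
  by (rule bij_betw_byWitness[where f' = \<Phi>]) (use assms in auto)

lemma bij_betw_add_mod:
  assumes "a < (n::nat)"
  shows "bij_betw (\<lambda>k. (a + k) mod n) {..<n} {..<n}"
proof (rule bij_betw_byWitness[where f' = "\<lambda>u. (u + n - a) mod n"])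
  have "((a + k) mod n + n - a) mod n = k" if "k < n" for k
    using that assms by (cases "a + k < n") (simp_all add: le_mod_geq)
  then show "\<forall>k\<in>{..<n}. ((a + k) mod n + n - a) mod n = k" by simp
  have "(a + (u + n - a) mod n) mod n = u" if "u < n" for u
    using that assms by (simp add: mod_add_right_eq)
  then show "\<forall>u\<in>{..<n}. (a + (u + n - a) mod n) mod n = u" by simp
qed (use assms in auto)

lemma mult_add_less_mult:
  assumes "k < n" and "i < (B::nat)"
  shows "k * B + i < B * n"
proof -
  have "k * B + i < (k + 1) * B" using assms by simp
  also have "\<dots> \<le> n * B" using assms by (intro mult_right_mono) auto
  finally show ?thesis by (simp add: mult.commute)
qed

lemma card_residue_class:
  assumes "i < (B::nat)"
  shows "card {m. m < B * n \<and> P m \<and> m mod B = i} = card {k. k < n \<and> P (k * B + i)}"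
proof (rule sym, rule bij_betw_same_card, rule bij_betw_byWitness[where f' = "\<lambda>m. m div B"])
  show "(\<lambda>k. k * B + i) ` {k. k < n \<and> P (k * B + i)} \<subseteq> {m. m < B * n \<and> P m \<and> m mod B = i}"
    using assms mult_add_less_mult[OF _ assms] by auto
  show "(\<lambda>m. m div B) ` {m. m < B * n \<and> P m \<and> m mod B = i} \<subseteq> {k. k < n \<and> P (k * B + i)}"
    by (auto simp: less_mult_imp_div_less mult.commute)
qed (use assms div_mult_mod_eq in auto)

lemma card_eq_sum_residue_classes:
  assumes "0 < (B::nat)"
  shows "card {m. m < N \<and> P m} = (\<Sum>i<B. card {m. m < N \<and> P m \<and> m mod B = i})"
proof -
  have "{m. m < N \<and> P m} = (\<Union>i<B. {m. m < N \<and> P m \<and> m mod B = i})"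
    using assms by auto
  then show ?thesis by (simp only:) (rule card_UN_disjoint, auto)
qed

lemma card_filter_add_card_filter_not: "card {k. k < m \<and> P k} + card {k. k < m \<and> \<not> P k} = m"
proof -
  have "card ({k. k < m \<and> P k} \<union> {k. k < m \<and> \<not> P k}) = card {k. k < m \<and> P k} + card {k. k < m \<and> \<not> P k}"
    by (rule card_Un_disjoint) auto
  moreover have "{k. k < m \<and> P k} \<union> {k. k < m \<and> \<not> P k} = {..<m}" by auto
  ultimately show ?thesis by simp
qed

lemma card_subsets_containing:
  assumes "finite A" and "x \<in> A"
  shows "card {S. S \<subseteq> A \<and> x \<in> S \<and> card S = Suc k} = (card A - 1) choose k"
proof -
  have "bij_betw (insert x) {S. S \<subseteq> A - {x} \<and> card S = k} {S. S \<subseteq> A \<and> x \<in> S \<and> card S = Suc k}"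
  proof (rule bij_betw_byWitness[where f' = "\<lambda>S. S - {x}"])
    show "insert x ` {S. S \<subseteq> A - {x} \<and> card S = k} \<subseteq> {S. S \<subseteq> A \<and> x \<in> S \<and> card S = Suc k}"
      using assms by (auto simp: finite_subset card_insert_if)
    show "(\<lambda>S. S - {x}) ` {S. S \<subseteq> A \<and> x \<in> S \<and> card S = Suc k} \<subseteq> {S. S \<subseteq> A - {x} \<and> card S = k}"
      using assms by (auto simp: finite_subset)
  qed auto
  then have "card {S. S \<subseteq> A \<and> x \<in> S \<and> card S = Suc k} = card {S. S \<subseteq> A - {x} \<and> card S = k}"
    by (simp add: bij_betw_same_card)
  also have "\<dots> = (card A - 1) choose k"
    using assms by (simp add: n_subsets)
  finally show ?thesis .
qed

lemma card_rank_eq_1: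
  fixes key :: "'a \<Rightarrow> 'b::linorder"
  assumes fin: "finite M" and inj: "inj_on key M" and j: "j \<in> {1..card M}"
  shows "card {a \<in> M. card {u \<in> M. key u \<le> key a} = j} = 1"
proof -
  define rank where "rank a = card {u \<in> M. key u \<le> key a}" for a
  have rank_range: "rank a \<in> {1..card M}" if "a \<in> M" for a
    unfolding rank_def using fin that by (auto intro: card_mono simp: Suc_le_eq card_gt_0_iff)
  have rank_mono: "rank a < rank b" if "a \<in> M" "b \<in> M" "key a < key b" for a b
  proof -
    have "{u \<in> M. key u \<le> key a} \<subseteq> {u \<in> M. key u \<le> key b}"
      and "b \<in> {u \<in> M. key u \<le> key b} - {u \<in> M. key u \<le> key a}"
      using that by auto
    then have "{u \<in> M. key u \<le> key a} \<subset> {u \<in> M. key u \<le> key b}" by blast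
    then show ?thesis unfolding rank_def using fin by (intro psubset_card_mono) auto
  qed
  have "inj_on rank M"
  proof (rule inj_onI)
    fix a b assume "a \<in> M" "b \<in> M" "rank a = rank b"
    then show "a = b"
      using rank_mono inj_onD[OF inj] by (metis less_irrefl linorder_neqE)
  qed
  then have "rank ` M = {1..card M}"
    using rank_range by (intro card_subset_eq) (auto simp: card_image)
  then obtain a where a: "a \<in> M" "rank a = j" using j by (metis imageE)
  then have "{a \<in> M. rank a = j} = {a}"
    using \<open>inj_on rank M\<close> by (auto dest: inj_onD)
  then show ?thesis unfolding rank_def by simp
qed

lemma dvd_add_le_iff_less:
  fixes d x y :: int
  assumes "0 < d" and "d dvd x" and "d dvd y"
  shows "x + d \<le> y \<longleftrightarrow> x < y"
proof -
  obtain s t where "x = d * s" "y = d * t" using assms(2,3) by (auto elim!: dvdE)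
  moreover have "d * s + d \<le> d * t \<longleftrightarrow> s + 1 \<le> t"
    using assms(1) by (metis distrib_left mult.right_neutral mult_le_cancel_left_pos)
  ultimately show ?thesis using assms(1) by auto
qed

section \<open>Residue columns of Boolean lists\<close>

definition columns :: "nat \<Rightarrow> nat \<Rightarrow> bool \<Rightarrow> bool list \<Rightarrow> nat \<Rightarrow> nat set" where
  "columns B n v p = (\<lambda>i\<in>{..<B}. {k. k < n \<and> p ! (k * B + i) = v})"

lemma bij_betw_columns:
  assumes "0 < B"
  shows "bij_betw (columns B n v) {p. length p = B * n} (\<Pi>\<^sub>E i\<in>{..<B}. Pow {..<n})"
proof -
  define interleave where
    "interleave f = map (\<lambda>m. (m div B \<in> f (m mod B)) = v) [0..<B * n]" for f :: "nat \<Rightarrow> nat set"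
  have nth_interleave: "interleave f ! (k * B + i) = ((k \<in> f i) = v)" if "k < n" "i < B" for f k i
    using that mult_add_less_mult[OF that] by (simp add: interleave_def)
  show ?thesis
  proof (rule bij_betw_byWitness[where f' = interleave])
    show "\<forall>p\<in>{p. length p = B * n}. interleave (columns B n v p) = p"
    proof (intro ballI nth_equalityI)
      fix p m assume "p \<in> {p. length p = B * n}" "m < length (interleave (columns B n v p))"
      then have "m < B * n" by (simp add: interleave_def)
      define k i where "k = m div B" and "i = m mod B"
      have "k < n" "i < B" "m = k * B + i"
        using \<open>m < B * n\<close> assms less_mult_imp_div_less[of m n B]
        by (simp_all add: k_def i_def mult.commute)
      then show "interleave (columns B n v p) ! m = p ! m"
        by (cases v) (simp_all add: nth_interleave columns_def)
    next
      fix p :: "bool list" assume "p \<in> {p. length p = B * n}"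
      then show "length (interleave (columns B n v p)) = length p" by (simp add: interleave_def)
    qed
    show "\<forall>f\<in>\<Pi>\<^sub>E i\<in>{..<B}. Pow {..<n}. columns B n v (interleave f) = f"
    proof (intro ballI ext)
      fix f i assume f: "f \<in> (\<Pi>\<^sub>E i\<in>{..<B}. Pow {..<n})"
      show "columns B n v (interleave f) i = f i"
      proof (cases "i < B")
        case True
        then have "f i \<subseteq> {..<n}" using f by auto
        then show ?thesis using True by (auto simp: columns_def nth_interleave)
      next
        case False
        then have "f i = undefined" using PiE_arb[OF f] by simp
        then show ?thesis using False by (simp add: columns_def)
      qed
    qed
    show "columns B n v ` {p. length p = B * n} \<subseteq> (\<Pi>\<^sub>E i\<in>{..<B}. Pow {..<n})"
      unfolding columns_def by (auto simp only: restrict_PiE_iff) auto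
    show "interleave ` (\<Pi>\<^sub>E i\<in>{..<B}. Pow {..<n}) \<subseteq> {p. length p = B * n}"
      by (auto simp: interleave_def)
  qed
qed

lemma card_lists_column_counts:
  fixes v :: bool
  assumes "0 < B" and "0 < n" and "0 < c 0"
  shows "card {p. length p = B * n \<and> p ! 0 = v \<and>
      (\<forall>i<B. card {m. m < length p \<and> p ! m = v \<and> m mod B = i} = c i)}
    = ((n - 1) choose (c 0 - 1)) * (\<Prod>i\<in>{1..<B}. n choose c i)"
proof -
  define T where "T i = {S. S \<subseteq> {..<n} \<and> (i = 0 \<longrightarrow> 0 \<in> S) \<and> card S = c i}" for i
  have "columns B n v p \<in> (\<Pi>\<^sub>E i\<in>{..<B}. T i) \<longleftrightarrow> p ! 0 = v \<and>
      (\<forall>i<B. card {m. m < length p \<and> p ! m = v \<and> m mod B = i} = c i)"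
    if "length p = B * n" for p
  proof -
    have "card {m. m < length p \<and> p ! m = v \<and> m mod B = i} = card {k. k < n \<and> p ! (k * B + i) = v}"
      if "i < B" for i
      using \<open>length p = B * n\<close> card_residue_class[OF that, of n "\<lambda>m. p ! m = v"] by simp
    moreover have "0 \<in> {k. k < n \<and> p ! (k * B + 0) = v} \<longleftrightarrow> p ! 0 = v"
      using assms(2) by simp
    ultimately show ?thesis
      using assms(1) unfolding columns_def restrict_PiE_iff T_def lessThan_iff mem_Collect_eq
      by (metis (no_types, lifting) mem_Collect_eq lessThan_iff subsetI)
  qed
  then have lists_eq: "{p. length p = B * n \<and> p ! 0 = v \<and>
      (\<forall>i<B. card {m. m < length p \<and> p ! m = v \<and> m mod B = i} = c i)}
    = {p \<in> {p. length p = B * n}. columns B n v p \<in> (\<Pi>\<^sub>E i\<in>{..<B}. T i)}"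
    by blast
  have "(\<Pi>\<^sub>E i\<in>{..<B}. T i) \<subseteq> (\<Pi>\<^sub>E i\<in>{..<B}. Pow {..<n})"
    by (rule PiE_mono) (auto simp: T_def)
  then have columns_eq: "{f \<in> (\<Pi>\<^sub>E i\<in>{..<B}. Pow {..<n}). f \<in> (\<Pi>\<^sub>E i\<in>{..<B}. T i)}
      = (\<Pi>\<^sub>E i\<in>{..<B}. T i)"
    by blast
  have T0: "card (T 0) = (n - 1) choose (c 0 - 1)"
    using card_subsets_containing[of "{..<n}" 0 "c 0 - 1"] assms(2,3) by (simp add: T_def)
  have Ti: "card (T i) = n choose c i" if "i \<in> {1..<B}" for i
    using that by (simp add: T_def n_subsets)
  have "{..<B} = insert 0 {1..<B}" using assms(1) by auto
  have "card {p. length p = B * n \<and> p ! 0 = v \<and>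
      (\<forall>i<B. card {m. m < length p \<and> p ! m = v \<and> m mod B = i} = c i)}
    = card {f \<in> (\<Pi>\<^sub>E i\<in>{..<B}. Pow {..<n}). f \<in> (\<Pi>\<^sub>E i\<in>{..<B}. T i)}"
    unfolding lists_eq by (rule bij_betw_same_card[OF bij_betw_filter[OF bij_betw_columns[OF assms(1)]]])
  also have "\<dots> = (\<Prod>i<B. card (T i))"
    unfolding columns_eq by (rule card_PiE) simp
  also have "\<dots> = card (T 0) * (\<Prod>i\<in>{1..<B}. card (T i))"
    unfolding \<open>{..<B} = insert 0 {1..<B}\<close> by simp
  also have "\<dots> = ((n - 1) choose (c 0 - 1)) * (\<Prod>i\<in>{1..<B}. n choose c i)"
    using T0 Ti by simp
  finally show ?thesis .
qed

lemma height_0 [simp]: "height r p 0 = 0"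
  by (simp add: height_def)

lemma height_Suc: "height r p (Suc m) = height r p m + (if p ! m then 1 else - int r)"
  by (simp add: height_def)

lemma height_cong: "(\<And>k. k < m \<Longrightarrow> p ! k = q ! k) \<Longrightarrow> height r p m = height r q m"
  unfolding height_def by (intro sum.cong) auto

lemma height_eq_down_steps:
  "height r p m = int m - (int r + 1) * int (card {k. k < m \<and> \<not> p ! k})"
proof (induction m)
  case 0
  show ?case by (simp add: height_def)
next
  case (Suc m)
  have "{k. k < Suc m \<and> \<not> p ! k} =
      (if p ! m then {k. k < m \<and> \<not> p ! k} else insert m {k. k < m \<and> \<not> p ! k})"
    by (auto simp: less_Suc_eq)
  then show ?case using Suc by (simp add: height_Suc algebra_simps)
qed

lemma height_block_dvd: "(int r + 1) dvd height r p (u * (r + 1))"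
proof -
  have "height r p (u * (r + 1)) = (int r + 1) * (int u - int (card {k. k < u * (r + 1) \<and> \<not> p ! k}))"
    unfolding height_eq_down_steps by (simp add: algebra_simps)
  then show ?thesis by simp
qed

lemma lpaths_iff_down_steps:
  assumes "0 < n"
  shows "p \<in> lpaths r n \<longleftrightarrow> length p = (r + 1) * n \<and> card {k. k < length p \<and> \<not> p ! k} = n - 1"
proof -
  have endpoint: "int ((r + 1) * n) - (int r + 1) * int d = int r + 1 \<longleftrightarrow> d = n - 1" for d
  proof -
    have "int ((r + 1) * n) - (int r + 1) * int d = (int r + 1) * (int n - int d)"
      by (simp add: algebra_simps)
    moreover have "(int r + 1) * (int n - int d) = int r + 1 \<longleftrightarrow> int n - int d = 1"
      by (simp add: mult_cancel_left2)
    ultimately show ?thesis using assms by arith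
  qed
  show ?thesis
  proof (cases "length p = (r + 1) * n")
    case True
    then show ?thesis
      unfolding lpaths_def height_eq_down_steps using endpoint[of "card {k. k < length p \<and> \<not> p ! k}"]
      by (simp only: mem_Collect_eq simp_thms)
  qed (simp add: lpaths_def)
qed

lemma class_counts_imp_lpaths:
  assumes "0 < n" and "length p = (r + 1) * n"
    and counts: "\<forall>i\<le>r. card {m. m < length p \<and> p ! m = v \<and> m mod (r + 1) = i} = c i"
    and total: "(\<Sum>i\<le>r. c i) = (if v then r * n + 1 else n - 1)"
  shows "p \<in> lpaths r n"
proof -
  have "card {m. m < length p \<and> p ! m = v}
      = (\<Sum>i<r + 1. card {m. m < length p \<and> p ! m = v \<and> m mod (r + 1) = i})"
    by (rule card_eq_sum_residue_classes) simp
  also have "\<dots> = (\<Sum>i\<le>r. c i)"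
    using counts by (simp add: lessThan_Suc_atMost)
  finally have "card {m. m < length p \<and> p ! m = v} = (if v then r * n + 1 else n - 1)"
    using total by simp
  moreover have "card {k. k < length p \<and> p ! k} + card {k. k < length p \<and> \<not> p ! k} = length p"
    by (rule card_filter_add_card_filter_not)
  ultimately have "card {k. k < length p \<and> \<not> p ! k} = n - 1"
    using assms(1,2) by (cases v) (simp_all add: algebra_simps)
  then show ?thesis
    using assms(1,2) by (simp add: lpaths_iff_down_steps)
qed

lemma height_drop:
  assumes "s \<le> length p"
  shows "height r (drop s p) t = height r p (s + t) - height r p s"
  using assms by (induction t) (simp_all add: height_Suc)

lemma height_rotate:
  assumes "s \<le> length p" and "t \<le> length p"
  shows "height r (rotate s p) t =
    (if s + t \<le> length p then height r p (s + t) - height r p s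
     else height r p (s + t - length p) + height r p (length p) - height r p s)"
proof -
  have "rotate s p ! k = drop s (p @ p) ! k" if "k < t" for k
  proof -
    have "k < length p" "s + k < 2 * length p" using that assms by auto
    have "drop s (p @ p) ! k = (p @ p) ! (s + k)" using assms by (intro nth_drop) simp
    also have "\<dots> = p ! ((s + k) mod length p)"
    proof (cases "s + k < length p")
      case False
      then have "(s + k) mod length p = s + k - length p"
        using \<open>s + k < 2 * length p\<close> by (simp add: le_mod_geq)
      then show ?thesis using False by (simp add: nth_append)
    qed (simp add: nth_append)
    finally show ?thesis using \<open>k < length p\<close> by (simp add: nth_rotate)
  qed
  then have "height r (rotate s p) t = height r (drop s (p @ p)) t" by (rule height_cong)
  also have "\<dots> = height r (p @ p) (s + t) - height r (p @ p) s"
    using assms by (intro height_drop) simp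
  finally have rotate_eq: "height r (rotate s p) t = height r (p @ p) (s + t) - height r (p @ p) s" .
  have prefix: "height r (p @ p) m = height r p m" if "m \<le> length p" for m
    using that by (intro height_cong) (simp add: nth_append)
  show ?thesis
  proof (cases "s + t \<le> length p")
    case True
    then show ?thesis using rotate_eq prefix[of "s + t"] prefix[OF assms(1)] by simp
  next
    case False
    define m where "m = s + t - length p"
    have "s + t = length p + m" "m \<le> length p" using False assms by (auto simp: m_def)
    have "height r (p @ p) (s + t) = height r (p @ p) (length p + m)"
      using \<open>s + t = length p + m\<close> by (rule arg_cong)
    also have "\<dots> = height r p (length p) + height r p m"
      using height_drop[of "length p" "p @ p" r m] prefix[of "length p"] by simp
    finally show ?thesis
      using rotate_eq prefix[OF assms(1)] False by (simp add: m_def)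
  qed
qed

section \<open>Rotation by whole blocks\<close>

lemma nth_rotate_block:
  assumes "length p = B * n" and "i < B" and "k < n"
  shows "rotate (a * B) p ! (k * B + i) = p ! ((a + k) mod n * B + i)"
proof -
  have "rotate (a * B) p ! (k * B + i) = p ! (((a + k) * B + i) mod (B * n))"
    using assms mult_add_less_mult[OF assms(3,2)] by (simp add: nth_rotate algebra_simps)
  also have "((a + k) * B + i) mod (B * n) = (a + k) mod n * B + i"
    using assms(2) by (simp add: mod_mult2_eq mult.commute)
  finally show ?thesis .
qed

lemma card_class_rotate_block:
  assumes "length p = B * n" and "a < n" and "i < B"
  shows "card {m. m < length p \<and> rotate (a * B) p ! m = v \<and> m mod B = i}
       = card {m. m < length p \<and> p ! m = v \<and> m mod B = i}"
proof -
  have "card {m. m < length p \<and> rotate (a * B) p ! m = v \<and> m mod B = i}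
      = card {k. k < n \<and> rotate (a * B) p ! (k * B + i) = v}"
    using assms(1) card_residue_class[OF assms(3), of n] by simp
  also have "\<dots> = card {k \<in> {..<n}. p ! ((a + k) mod n * B + i) = v}"
    using nth_rotate_block[OF assms(1,3)] by (intro arg_cong[where f = card]) auto
  also have "\<dots> = card {k \<in> {..<n}. p ! (k * B + i) = v}"
    by (rule card_filter_bij_betw[OF bij_betw_add_mod[OF assms(2)]])
  also have "\<dots> = card {m. m < length p \<and> p ! m = v \<and> m mod B = i}"
    using assms card_residue_class[OF assms(3), of n] by simp
  finally show ?thesis .
qed

lemma height_rotate_block:
  assumes "p \<in> lpaths r n" and "a < n" and "k < n"
  shows "height r (rotate (a * (r + 1)) p) (k * (r + 1)) =
    (if a + k < n then height r p ((a + k) * (r + 1)) - height r p (a * (r + 1))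
     else height r p ((a + k - n) * (r + 1)) + (int r + 1) - height r p (a * (r + 1)))"
proof -
  have len: "length p = (r + 1) * n" and endpoint: "height r p (length p) = int r + 1"
    using assms(1) by (auto simp: lpaths_def)
  have le: "u * (r + 1) \<le> length p" if "u \<le> n" for u
    using that len by (metis mult.commute mult_le_mono1)
  have "height r (rotate (a * (r + 1)) p) (k * (r + 1)) =
    (if (a + k) * (r + 1) \<le> length p then height r p ((a + k) * (r + 1)) - height r p (a * (r + 1))
     else height r p ((a + k) * (r + 1) - length p) + (int r + 1) - height r p (a * (r + 1)))"
    using height_rotate[OF le le, of a k r] assms(2,3) endpoint by (simp add: algebra_simps)
  moreover have "(a + k) * (r + 1) \<le> length p \<longleftrightarrow> a + k \<le> n"
    unfolding len mult.commute[of "r + 1" n] by (rule mult_le_cancel2[THEN trans]) simp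
  moreover have "(a + k) * (r + 1) - length p = (a + k - n) * (r + 1)"
    unfolding len mult.commute[of "r + 1" n] by (rule diff_mult_distrib[symmetric])
  moreover have "height r p (length p) - height r p (a * (r + 1)) =
      height r p ((a + k - n) * (r + 1)) + (int r + 1) - height r p (a * (r + 1))" if "a + k = n"
    using that endpoint by simp
  ultimately show ?thesis
    using len by (auto simp: mult.commute)
qed

definition marked_blocks :: "bool \<Rightarrow> nat \<Rightarrow> nat \<Rightarrow> bool list \<Rightarrow> nat set" where
  "marked_blocks v r n p = {a. a < n \<and> p ! (a * (r + 1)) = v}"

definition low_marks :: "bool \<Rightarrow> nat \<Rightarrow> bool list \<Rightarrow> nat" where
  "low_marks v r p = card {m. m < length p \<and> p ! m = v \<and> m mod (r + 1) = 0 \<and> height r p m \<le> 0}"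

text \<open>Ties are broken in favour of later blocks: after rotating the path to start at block
  \<open>a\<close>, a block \<open>u \<ge> a\<close> starts at relative height \<open>h\<^sub>u - h\<^sub>a\<close>, whereas a block \<open>u < a\<close> has wrapped
  around and starts \<open>r + 1\<close> higher.\<close>

definition block_key :: "nat \<Rightarrow> bool list \<Rightarrow> nat \<Rightarrow> int \<times> int" where
  "block_key r p a = (height r p (a * (r + 1)), - int a)"

lemma low_marks_rotate_block:
  assumes p: "p \<in> lpaths r n" and a: "a \<in> marked_blocks v r n p"
  shows "low_marks v r (rotate (a * (r + 1)) p) =
    card {u \<in> marked_blocks v r n p. block_key r p u \<le> block_key r p a}"
proof -
  let ?q = "rotate (a * (r + 1)) p"
  have len: "length p = (r + 1) * n" using p by (simp add: lpaths_def)
  have "a < n" using a by (simp add: marked_blocks_def)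
  define low where "low u \<longleftrightarrow> p ! (u * (r + 1)) = v \<and> block_key r p u \<le> block_key r p a" for u
  have shift: "?q ! (k * (r + 1) + 0) = v \<and> height r ?q (k * (r + 1) + 0) \<le> 0 \<longleftrightarrow> low ((a + k) mod n)"
    if "k < n" for k
  proof (cases "a + k < n")
    case True
    then show ?thesis
      using nth_rotate_block[OF len _ that, of 0 a] height_rotate_block[OF p \<open>a < n\<close> that]
      by (auto simp: low_def block_key_def)
  next
    case False
    then have "(a + k) mod n = a + k - n" "a + k - n < a" "a + k - n \<le> n"
      using that \<open>a < n\<close> by (simp_all add: le_mod_geq)
    moreover have "height r p ((a + k - n) * (r + 1)) + (int r + 1) \<le> height r p (a * (r + 1)) \<longleftrightarrow>
        height r p ((a + k - n) * (r + 1)) < height r p (a * (r + 1))"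
      using height_block_dvd[of r p "a + k - n"] height_block_dvd[of r p a]
      by (intro dvd_add_le_iff_less) simp_all
    ultimately show ?thesis
      using False nth_rotate_block[OF len _ that, of 0 a] height_rotate_block[OF p \<open>a < n\<close> that]
      by (auto simp: low_def block_key_def)
  qed
  have "low_marks v r ?q =
      card {m. m < (r + 1) * n \<and> (?q ! m = v \<and> height r ?q m \<le> 0) \<and> m mod (r + 1) = 0}"
    unfolding low_marks_def using len by (intro arg_cong[where f = card]) auto
  also have "\<dots> = card {k. k < n \<and> ?q ! (k * (r + 1) + 0) = v \<and> height r ?q (k * (r + 1) + 0) \<le> 0}"
    by (rule card_residue_class) simp
  also have "\<dots> = card {k \<in> {..<n}. low ((a + k) mod n)}"
    using shift by (intro arg_cong[where f = card]) auto
  also have "\<dots> = card {u \<in> {..<n}. low u}"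
    by (rule card_filter_bij_betw[OF bij_betw_add_mod[OF \<open>a < n\<close>]])
  also have "\<dots> = card {u \<in> marked_blocks v r n p. block_key r p u \<le> block_key r p a}"
    unfolding low_def marked_blocks_def by (intro arg_cong[where f = card]) auto
  finally show ?thesis .
qed

definition class_paths :: "bool \<Rightarrow> nat \<Rightarrow> nat \<Rightarrow> (nat \<Rightarrow> nat) \<Rightarrow> bool list set" where
  "class_paths v r n c = {p \<in> lpaths r n. p ! 0 = v \<and>
     (\<forall>i\<le>r. card {m. m < length p \<and> p ! m = v \<and> m mod (r + 1) = i} = c i)}"

lemma finite_class_paths: "finite (class_paths v r n c)"
proof (rule finite_subset)
  show "class_paths v r n c \<subseteq> {p. set p \<subseteq> UNIV \<and> length p = (r + 1) * n}"
    by (auto simp: class_paths_def lpaths_def)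
qed (rule finite_lists_length_eq, simp)

lemma card_marked_blocks:
  assumes "p \<in> class_paths v r n c"
  shows "card (marked_blocks v r n p) = c 0"
proof -
  have "length p = (r + 1) * n" and "c 0 = card {m. m < length p \<and> p ! m = v \<and> m mod (r + 1) = 0}"
    using assms by (auto simp: class_paths_def lpaths_def)
  then show ?thesis
    using card_residue_class[of 0 "r + 1" n "\<lambda>m. p ! m = v"] by (simp add: marked_blocks_def)
qed

lemma rotate_block_in_class_paths:
  assumes p: "p \<in> class_paths v r n c" and a: "a \<in> marked_blocks v r n p"
  shows "rotate (a * (r + 1)) p \<in> class_paths v r n c"
proof -
  let ?q = "rotate (a * (r + 1)) p"
  have len: "length p = (r + 1) * n" and "a < n" and "p ! (a * (r + 1)) = v"
    using p a by (auto simp: class_paths_def lpaths_def marked_blocks_def)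
  then have "a * (r + 1) \<le> length p" by (metis less_imp_le mult.commute mult_le_mono1)
  then have "height r ?q (length ?q) = height r p (length p)"
    using height_rotate[of "a * (r + 1)" p "length p" r] by auto
  moreover have "p \<in> lpaths r n" using p by (simp add: class_paths_def)
  ultimately have "?q \<in> lpaths r n" by (auto simp: lpaths_def)
  moreover have "?q ! 0 = v"
    using nth_rotate_block[OF len, of 0 0 a] \<open>a < n\<close> \<open>p ! (a * (r + 1)) = v\<close> by simp
  moreover have "card {m. m < length ?q \<and> ?q ! m = v \<and> m mod (r + 1) = i} = c i" if "i \<le> r" for i
  proof -
    have "card {m. m < length ?q \<and> ?q ! m = v \<and> m mod (r + 1) = i}
        = card {m. m < length p \<and> p ! m = v \<and> m mod (r + 1) = i}"
      using card_class_rotate_block[OF len \<open>a < n\<close>, of i v] that by simp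
    also have "\<dots> = c i" using p that by (simp add: class_paths_def)
    finally show ?thesis .
  qed
  ultimately show ?thesis by (simp add: class_paths_def)
qed

lemma rotate_block_inverse:
  assumes p: "p \<in> class_paths v r n c" and a: "a \<in> marked_blocks v r n p"
  shows "(n - a) mod n \<in> marked_blocks v r n (rotate (a * (r + 1)) p)"
    and "rotate ((n - a) mod n * (r + 1)) (rotate (a * (r + 1)) p) = p"
proof -
  have len: "length p = (r + 1) * n" and "p ! 0 = v" and "a < n"
    using p a by (auto simp: class_paths_def lpaths_def marked_blocks_def)
  have "(a + (n - a) mod n) mod n = 0"
    using \<open>a < n\<close> by (cases "a = 0") simp_all
  then show "(n - a) mod n \<in> marked_blocks v r n (rotate (a * (r + 1)) p)"
    using nth_rotate_block[OF len, of 0 "(n - a) mod n" a] \<open>a < n\<close> \<open>p ! 0 = v\<close>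
    by (simp add: marked_blocks_def)
  have "(n - a) mod n + a = (if a = 0 then 0 else n)"
    using \<open>a < n\<close> by simp
  then have "(n - a) mod n * (r + 1) + a * (r + 1) = (if a = 0 then 0 else length p)"
    using len by (metis add_mult_distrib mult.commute mult_zero_left)
  then show "rotate ((n - a) mod n * (r + 1)) (rotate (a * (r + 1)) p) = p"
    by (simp add: rotate_rotate split: if_splits)
qed

lemma card_low_marks_mult:
  assumes "j \<in> {1..c 0}"
  shows "card {p \<in> class_paths v r n c. low_marks v r p = j} * c 0 = card (class_paths v r n c)"
proof -
  define A where "A = class_paths v r n c"
  define P where "P = Sigma A (marked_blocks v r n)"
  define \<Phi> :: "bool list \<times> nat \<Rightarrow> bool list \<times> nat"
    where "\<Phi> = (\<lambda>(p, a). (rotate (a * (r + 1)) p, (n - a) mod n))"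
  have "bij_betw \<Phi> P P"
  proof (rule bij_betw_involution)
    show "\<Phi> ` P \<subseteq> P"
      using rotate_block_in_class_paths rotate_block_inverse(1) by (auto simp: P_def A_def \<Phi>_def)
    fix x assume "x \<in> P"
    then obtain p a where x: "x = (p, a)" "p \<in> A" "a \<in> marked_blocks v r n p"
      by (auto simp: P_def)
    then have "(n - (n - a) mod n) mod n = a"
      by (cases "a = 0") (auto simp: marked_blocks_def)
    then show "\<Phi> (\<Phi> x) = x"
      using rotate_block_inverse(2)[of p v r n c a] x by (simp add: \<Phi>_def A_def)
  qed
  then have "card {x \<in> P. low_marks v r (fst (\<Phi> x)) = j} = card {x \<in> P. low_marks v r (fst x) = j}"
    by (rule card_filter_bij_betw)
  moreover have "{x \<in> P. low_marks v r (fst (\<Phi> x)) = j} =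
      Sigma A (\<lambda>p. {a \<in> marked_blocks v r n p. low_marks v r (rotate (a * (r + 1)) p) = j})"
    by (auto simp: P_def \<Phi>_def)
  moreover have "{x \<in> P. low_marks v r (fst x) = j} = Sigma {p \<in> A. low_marks v r p = j} (marked_blocks v r n)"
    by (auto simp: P_def)
  moreover have "card {a \<in> marked_blocks v r n p. low_marks v r (rotate (a * (r + 1)) p) = j} = 1"
    if "p \<in> A" for p
  proof -
    have "p \<in> lpaths r n" using that by (simp add: A_def class_paths_def)
    then have "{a \<in> marked_blocks v r n p. low_marks v r (rotate (a * (r + 1)) p) = j} =
        {a \<in> marked_blocks v r n p. card {u \<in> marked_blocks v r n p. block_key r p u \<le> block_key r p a} = j}"
      using low_marks_rotate_block by auto
    also have "card \<dots> = 1"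
      using assms card_marked_blocks that
      by (intro card_rank_eq_1) (auto simp: A_def marked_blocks_def block_key_def inj_on_def)
    finally show ?thesis .
  qed
  moreover have "card (marked_blocks v r n p) = c 0" if "p \<in> A" for p
    using that card_marked_blocks by (simp add: A_def)
  moreover have "finite A" "\<And>p. finite (marked_blocks v r n p)"
    by (simp_all add: A_def finite_class_paths marked_blocks_def)
  ultimately show ?thesis
    by (simp add: A_def)
qed

lemma card_class_paths:
  assumes "0 < n" and "0 < c 0" and "(\<Sum>i\<le>r. c i) = (if v then r * n + 1 else n - 1)"
  shows "card (class_paths v r n c) = ((n - 1) choose (c 0 - 1)) * (\<Prod>i\<in>{1..r}. n choose c i)"
proof -
  have "class_paths v r n c = {p. length p = (r + 1) * n \<and> p ! 0 = v \<and>
      (\<forall>i<r + 1. card {m. m < length p \<and> p ! m = v \<and> m mod (r + 1) = i} = c i)}"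
    using class_counts_imp_lpaths[OF assms(1) _ _ assms(3)]
    by (auto simp: class_paths_def lpaths_def less_Suc_eq_le)
  then show ?thesis
    using card_lists_column_counts[of "r + 1" n c v] assms(1,2)
    by (simp add: atLeastLessThanSuc_atLeastAtMost)
qed

lemma card_low_marks:
  fixes v :: bool
  assumes "0 < n" and "0 < c 0" and "(\<Sum>i\<le>r. c i) = (if v then r * n + 1 else n - 1)"
    and "j \<in> {1..c 0}"
  shows "real (card {p \<in> lpaths r n. p ! 0 = v \<and>
            (\<forall>i\<le>r. card {m. m < length p \<and> p ! m = v \<and> m mod (r + 1) = i} = c i) \<and>
            card {m. m < length p \<and> p ! m = v \<and> m mod (r + 1) = 0 \<and> height r p m \<le> 0} = j})
     = 1 / real (c 0) * real ((n - 1) choose (c 0 - 1)) * (\<Prod>i\<in>{1..r}. real (n choose c i))"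
    (is "real (card ?S) = 1 / real (c 0) * real ?X * ?P")
proof -
  have "?S = {p \<in> class_paths v r n c. low_marks v r p = j}"
    unfolding class_paths_def low_marks_def mem_Collect_eq conj_assoc ..
  moreover have "card {p \<in> class_paths v r n c. low_marks v r p = j} * c 0
      = ((n - 1) choose (c 0 - 1)) * (\<Prod>i\<in>{1..r}. n choose c i)"
    using card_low_marks_mult[where c = c, OF assms(4)] card_class_paths[OF assms(1-3)] by simp
  then have "real (card {p \<in> class_paths v r n c. low_marks v r p = j}) * real (c 0) = real ?X * ?P"
    by (simp only: of_nat_mult[symmetric] of_nat_prod[symmetric])
  ultimately have "real (card ?S) = real ?X * ?P / real (c 0)"
    using assms(2) by (simp add: eq_divide_eq)
  then show ?thesis by simp
qed

theorem theorem16: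
  fixes r n :: nat and ns :: "nat \<Rightarrow> nat"
  assumes "r \<ge> 1" and "n \<ge> 1"
  shows
   "((\<forall>i\<le>r. ns i \<ge> 1) \<and> ns 0 \<ge> 2 \<and> (\<Sum>i\<le>r. ns i - 1) = n - 1 \<longrightarrow>
      (\<forall>j\<in>{1..ns 0 - 1}.
        real (card {p \<in> lpaths r n. \<not> p ! 0 \<and>
            (\<forall>i\<le>r. card {m. m < length p \<and> \<not> p ! m \<and> m mod (r + 1) = i} = ns i - 1) \<and>
            card {m. m < length p \<and> \<not> p ! m \<and> m mod (r + 1) = 0 \<and> height r p m \<le> 0} = j})
        = 1 / real (ns 0 - 1) * real ((n - 1) choose (ns 0 - 2)) *
          (\<Prod>i\<in>{1..r}. real (n choose (ns i - 1)))))
    \<and>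
    (ns 0 \<ge> 1 \<and> (\<Sum>i\<le>r. ns i) = r * n + 1 \<longrightarrow>
      (\<forall>j\<in>{1..ns 0}.
        real (card {p \<in> lpaths r n. p ! 0 \<and>
            (\<forall>i\<le>r. card {m. m < length p \<and> p ! m \<and> m mod (r + 1) = i} = ns i) \<and>
            card {m. m < length p \<and> p ! m \<and> m mod (r + 1) = 0 \<and> height r p m \<le> 0} = j})
        = 1 / real (ns 0) * real ((n - 1) choose (ns 0 - 1)) *
          (\<Prod>i\<in>{1..r}. real (n choose ns i))))"
  apply (intro conjI impI ballI)
  subgoal for j
    using card_low_marks[of n "\<lambda>i. ns i - 1" r False j] assms(2) by (simp add: numeral_2_eq_2)
  subgoal for j
    using card_low_marks[of n ns r True j] assms(2) by simp
  done

end
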